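(* There exists $C=C(m)>1$, depending only on $m=\dim M$, such that for every $g\in\mathcal{M}^{\mathsf{G},\mathsf{T}}$, $$C^{-1}|A|_g^2\le|\hat A_g|_g\le C|A|_g^2,\qquad C^{-1}|A|_g^2\le|\check A_g|_g\le C|A|_g^2 .$$
   Context: $M=\mathsf{G}/\mathsf{H}$ ($m=\dim M$) is an almost-effective homogeneous space with $\mathsf{G},\mathsf{H}$ compact connected, $Q$ an $\mathrm{Ad}(\mathsf{G})$-invariant inner product on $\mathfrak{g}$, $\mathfrak{m}=\mathfrak{h}^{\perp_Q}$, $\mathfrak{m}_0=\{X\in\mathfrak{m}:[\mathfrak{h},X]=0\}$. Let $\mathsf{T}$ be a torus in the gauge group $N_{\mathsf{G}}(\mathsf{H})/\mathsf{H}$ with Lie algebra $\mathfrak{t}\subset\mathfrak{m}_0$ abelian, and $\mathfrak{m}=\mathfrak{t}+\mathfrak{b}$ $Q$-orthogonally ($\mathfrak{b}\cong T(\mathsf{G}/\mathsf{H}\mathsf{T})$). $\mathcal{M}^{\mathsf{G},\mathsf{T}}$ is the set of $\mathsf{G}$-invariant metrics $g=g_{\mathfrak{t}}+g_{\mathfrak{b}}$ with $\mathfrak{t}\perp_g\mathfrak{b}$ and $g_{\mathfrak{b}}$ $\mathrm{Ad}(\mathsf{H}\mathsf{T})$-invariant. The O'Neill tensor $A$ is given by $A_XY=\frac12[X,Y]_{\mathfrak{t}}$ (orthogonal projection to $\mathfrak{t}$) for $X,Y\in\mathfrak{b}$, $A_U=0$ for $U\in\mathfrak{t}$, and $A_XU\in\mathfrak{b}$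 with $g(A_XU,Y)=-g(A_XY,U)$. With $\{X_i\}$, $\{U_j\}$ $g$-orthonormal bases of $\mathfrak{b}$, $\mathfrak{t}$: $|A|_g^2=\sum_{i,j}|A_{X_i}X_j|_g^2$, $\hat A_g(U,V)=\sum_ig(A_{X_i}U,A_{X_i}V)$ on $\mathfrak{t}$, $\check A_g(X,Y)=\sum_ig(A_XX_i,A_YX_i)$ on $\mathfrak{b}$, with norms taken with respect to $g$. *)

theory Defs
  imports "HOL-Analysis.Analysis" "HOL-Library.Function_Algebras"
begin

text \<open>The Lie
  algebra g of G is realised as the coordinate space R^N, i.e. the functions
  vanishing at all indices >= N, and the Ad(G)-invariant inner product Q is the
  standard inner product on it (every finite-dimensional inner product space is
  isometric to such a model).  Using one concrete ambient type (instead of a type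
  variable) lets the constant C be quantified uniformly over all dimensions.\<close>

type_synonym vec = "nat \<Rightarrow> real"

definition vsc :: "real \<Rightarrow> vec \<Rightarrow> vec" where
  "vsc r x = (\<lambda>i. r * x i)"

definition vspan :: "vec set \<Rightarrow> vec set" where
  "vspan S = module.span vsc S"

definition vsubspace :: "vec set \<Rightarrow> bool" where
  "vsubspace S = module.subspace vsc S"

definition vdim :: "vec set \<Rightarrow> nat" where
  "vdim S = vector_space.dim vsc S"

definition gsp :: "nat \<Rightarrow> vec set" where
  "gsp N = {x. \<forall>i\<ge>N. x i = 0}"

definition Qip :: "nat \<Rightarrow> vec \<Rightarrow> vec \<Rightarrow> real" where
  "Qip N x y = (\<Sum>i<N. x i * y i)"

text \<open>br is a Lie bracket on g for which Q is ad-invariant (infinitesimal form of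
  Ad(G)-invariance, G connected); such a Lie algebra is of compact type.\<close>
definition compact_lie_alg :: "nat \<Rightarrow> (vec \<Rightarrow> vec \<Rightarrow> vec) \<Rightarrow> bool" where
  "compact_lie_alg N br \<longleftrightarrow>
     (\<forall>x\<in>gsp N. \<forall>y\<in>gsp N. br x y \<in> gsp N) \<and>
     (\<forall>a x y z. x \<in> gsp N \<longrightarrow> y \<in> gsp N \<longrightarrow> z \<in> gsp N \<longrightarrow>
        br (vsc a x + y) z = vsc a (br x z) + br y z) \<and>
     (\<forall>x\<in>gsp N. \<forall>y\<in>gsp N. br x y = - br y x) \<and>
     (\<forall>x\<in>gsp N. \<forall>y\<in>gsp N. \<forall>z\<in>gsp N.
        br x (br y z) + br y (br z x) + br z (br x y) = 0) \<and>
     (\<forall>x\<in>gsp N. \<forall>y\<in>gsp N. \<forall>z\<in>gsp N. Qip N (br x y) z = - Qip N y (br x z))"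

text \<open>h is the Lie algebra of H: a subalgebra of g; almost effectiveness of G/H
  means h contains no nonzero ideal of g.\<close>
definition isotropy_alg :: "nat \<Rightarrow> (vec \<Rightarrow> vec \<Rightarrow> vec) \<Rightarrow> vec set \<Rightarrow> bool" where
  "isotropy_alg N br H \<longleftrightarrow>
     vsubspace H \<and> H \<subseteq> gsp N \<and> (\<forall>x\<in>H. \<forall>y\<in>H. br x y \<in> H) \<and>
     (\<forall>I. vsubspace I \<and> I \<subseteq> H \<and> (\<forall>x\<in>gsp N. \<forall>y\<in>I. br x y \<in> I) \<longrightarrow> I = {0})"

definition msp :: "nat \<Rightarrow> vec set \<Rightarrow> vec set" where
  "msp N H = {x \<in> gsp N. \<forall>h\<in>H. Qip N x h = 0}"

definition m0sp :: "nat \<Rightarrow> (vec \<Rightarrow> vec \<Rightarrow> vec) \<Rightarrow> vec set \<Rightarrow> vec set" where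
  "m0sp N br H = {x \<in> msp N H. \<forall>h\<in>H. br h x = 0}"

definition bsp :: "nat \<Rightarrow> vec set \<Rightarrow> vec set \<Rightarrow> vec set" where
  "bsp N H tt = {x \<in> msp N H. \<forall>u\<in>tt. Qip N x u = 0}"

text \<open>t: Lie algebra of the torus T in the gauge group, an abelian subspace of m_0.\<close>
definition torus_alg :: "nat \<Rightarrow> (vec \<Rightarrow> vec \<Rightarrow> vec) \<Rightarrow> vec set \<Rightarrow> vec set \<Rightarrow> bool" where
  "torus_alg N br H tt \<longleftrightarrow>
     vsubspace tt \<and> tt \<subseteq> m0sp N br H \<and> (\<forall>u\<in>tt. \<forall>v\<in>tt. br u v = 0)"

text \<open>g \<in> M^{G,T}: an Ad(H)-invariant inner product on m (= G-invariant metric on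
  G/H), with t \<perp>_g b and g_b Ad(HT)-invariant (infinitesimally: ad(h + t)).\<close>
definition GT_metric ::
  "nat \<Rightarrow> (vec \<Rightarrow> vec \<Rightarrow> vec) \<Rightarrow> vec set \<Rightarrow> vec set \<Rightarrow> (vec \<Rightarrow> vec \<Rightarrow> real) \<Rightarrow> bool" where
  "GT_metric N br H tt gm \<longleftrightarrow>
     (\<forall>a x y z. x \<in> msp N H \<longrightarrow> y \<in> msp N H \<longrightarrow> z \<in> msp N H \<longrightarrow>
        gm (vsc a x + y) z = a * gm x z + gm y z) \<and>
     (\<forall>x\<in>msp N H. \<forall>y\<in>msp N H. gm x y = gm y x) \<and>
     (\<forall>x\<in>msp N H. x \<noteq> 0 \<longrightarrow> gm x x > 0) \<and>
     (\<forall>h\<in>H. \<forall>x\<in>msp N H. \<forall>y\<in>msp N H. gm (br h x) y + gm x (br h y) = 0) \<and>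
     (\<forall>u\<in>tt. \<forall>x\<in>bsp N H tt. gm u x = 0) \<and>
     (\<forall>z\<in>H \<union> tt. \<forall>x\<in>bsp N H tt. \<forall>y\<in>bsp N H tt.
        gm (br z x) y + gm x (br z y) = 0)"

definition tproj :: "nat \<Rightarrow> vec set \<Rightarrow> vec \<Rightarrow> vec" where
  "tproj N tt v = (THE p. p \<in> tt \<and> (\<forall>u\<in>tt. Qip N (v - p) u = 0))"

text \<open>O'Neill tensor: A_X Y = 1/2 [X,Y]_t for X, Y in b.\<close>
definition Abb :: "nat \<Rightarrow> (vec \<Rightarrow> vec \<Rightarrow> vec) \<Rightarrow> vec set \<Rightarrow> vec \<Rightarrow> vec \<Rightarrow> vec" where
  "Abb N br tt X Y = vsc (1/2) (tproj N tt (br X Y))"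

definition Abt :: "nat \<Rightarrow> (vec \<Rightarrow> vec \<Rightarrow> vec) \<Rightarrow> vec set \<Rightarrow> vec set \<Rightarrow> (vec \<Rightarrow> vec \<Rightarrow> real)
                   \<Rightarrow> vec \<Rightarrow> vec \<Rightarrow> vec" where
  "Abt N br H tt gm X U = (THE w. w \<in> bsp N H tt \<and>
      (\<forall>Y\<in>bsp N H tt. gm w Y = - gm (Abb N br tt X Y) U))"

definition onb :: "(vec \<Rightarrow> vec \<Rightarrow> real) \<Rightarrow> vec set \<Rightarrow> vec set \<Rightarrow> bool" where
  "onb gm S B \<longleftrightarrow> finite B \<and> B \<subseteq> S \<and> S \<subseteq> vspan B \<and>
     (\<forall>x\<in>B. \<forall>y\<in>B. gm x y = (if x = y then 1 else 0))"

definition normA_sq :: "nat \<Rightarrow> (vec \<Rightarrow> vec \<Rightarrow> vec) \<Rightarrow> vec set \<Rightarrow> (vec \<Rightarrow> vec \<Rightarrow> real)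
                        \<Rightarrow> vec set \<Rightarrow> real" where
  "normA_sq N br tt gm XB =
     (\<Sum>x\<in>XB. \<Sum>y\<in>XB. gm (Abb N br tt x y) (Abb N br tt x y))"

definition hatA :: "nat \<Rightarrow> (vec \<Rightarrow> vec \<Rightarrow> vec) \<Rightarrow> vec set \<Rightarrow> vec set \<Rightarrow> (vec \<Rightarrow> vec \<Rightarrow> real)
                    \<Rightarrow> vec set \<Rightarrow> vec \<Rightarrow> vec \<Rightarrow> real" where
  "hatA N br H tt gm XB U V = (\<Sum>x\<in>XB. gm (Abt N br H tt gm x U) (Abt N br H tt gm x V))"

definition checkA :: "nat \<Rightarrow> (vec \<Rightarrow> vec \<Rightarrow> vec) \<Rightarrow> vec set \<Rightarrow> (vec \<Rightarrow> vec \<Rightarrow> real)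
                      \<Rightarrow> vec set \<Rightarrow> vec \<Rightarrow> vec \<Rightarrow> real" where
  "checkA N br tt gm XB X Y = (\<Sum>x\<in>XB. gm (Abb N br tt X x) (Abb N br tt Y x))"

definition form_norm :: "vec set \<Rightarrow> (vec \<Rightarrow> vec \<Rightarrow> real) \<Rightarrow> real" where
  "form_norm B F = sqrt (\<Sum>x\<in>B. \<Sum>y\<in>B. (F x y)\<^sup>2)"

end

theory Submission
  imports Defs
begin

text \<open>Expand everything in g-orthonormal bases X_i of b and U_k of t and put
  c((i,j),k) = g(A_{X_i} X_j, U_k).  Then the squared norm of A is the squared Frobenius norm
  of the matrix c, and both hat A and check A are Gram matrices of c: the entries of hat A are
  the inner products of the columns of c indexed by k, since g(A_X U, Y) = - g(A_X Y, U); those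
  of check A are the inner products of the columns indexed by i, the rows being (j,k).  For the
  Gram matrix G of any real matrix with n columns, Cauchy-Schwarz gives
  |G| <= tr G = |c|^2 <= sqrt n |G|, and n <= dim m, so C = m + 2 works.\<close>

lemma sum_fun_apply: "(sum f A) i = (\<Sum>a\<in>A. f a i)"
  by (induction A rule: infinite_finite_induct) auto

lemma vsc_apply: "vsc a x i = a * x i"
  by (simp add: vsc_def)

lemmas vec_apply = vsc_apply zero_fun_apply plus_fun_apply minus_apply uminus_apply sum_fun_apply

text \<open>Pointwise evaluation stays out of the simpset: it would rewrite vectors such as 0 or
  x + y into lambda terms that the vector-space lemmas no longer match.\<close>
declare zero_fun_apply[simp del] plus_fun_apply[simp del] minus_apply[simp del] uminus_apply[simp del]

interpretation V: vector_space vsc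
  by unfold_locales (auto simp: vsc_def fun_eq_iff algebra_simps vec_apply)

lemma gsp_subspace: "V.subspace (gsp N)"
  unfolding V.subspace_def gsp_def by (auto simp: vec_apply)

lemma gsp_subset_span_unit_vectors: "gsp N \<subseteq> V.span ((\<lambda>i j. if j = i then 1 else 0) ` {..<N})"
proof
  fix x assume x: "x \<in> gsp N"
  have "x = (\<Sum>i<N. vsc (x i) (\<lambda>j. if j = i then 1 else 0))"
    using x by (auto simp: fun_eq_iff gsp_def vec_apply if_distrib[of "(*) _"] cong: if_cong)
  then show "x \<in> V.span ((\<lambda>i j. if j = i then 1 else 0) ` {..<N})"
    by (metis (no_types, lifting) V.span_base V.span_scale V.span_sum image_eqI)
qed

lemma gsp_subset_has_finite_basis:
  assumes "S \<subseteq> gsp N"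
  obtains A where "finite A" "A \<subseteq> S" "V.independent A" "S \<subseteq> V.span A"
proof -
  obtain A where A: "A \<subseteq> S" "V.independent A" "S \<subseteq> V.span A"
    using V.maximal_independent_subset by blast
  have "A \<subseteq> V.span ((\<lambda>i j. if j = i then 1 else 0) ` {..<N})"
    using A(1) assms gsp_subset_span_unit_vectors by blast
  then have "finite A"
    using V.independent_span_bound[OF _ A(2)] by blast
  with A that show thesis by blast
qed

lemma Qip_add_left: "Qip N (x + y) z = Qip N x z + Qip N y z"
  by (simp add: vec_apply Qip_def sum.distrib algebra_simps)

lemma Qip_diff_left: "Qip N (x - y) z = Qip N x z - Qip N y z"
  by (simp add: vec_apply Qip_def sum_subtractf algebra_simps)

lemma Qip_scale_left: "Qip N (vsc a x) z = a * Qip N x z"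
  by (simp add: vec_apply Qip_def sum_distrib_left algebra_simps)

lemma Qip_commute: "Qip N x y = Qip N y x"
  by (simp add: Qip_def mult.commute)

lemma Qip_zero_left [simp]: "Qip N 0 z = 0"
  by (simp add: Qip_def vec_apply)

lemma Qip_zero_right [simp]: "Qip N z 0 = 0"
  by (simp add: Qip_def vec_apply)

lemma Qip_self_eq_0_iff:
  assumes "x \<in> gsp N"
  shows "Qip N x x = 0 \<longleftrightarrow> x = 0"
proof
  assume "Qip N x x = 0"
  then have "\<forall>i<N. x i * x i = 0"
    unfolding Qip_def by (subst (asm) sum_nonneg_eq_0_iff) auto
  with assms show "x = 0"
    unfolding gsp_def by (auto simp: fun_eq_iff vec_apply) (meson not_le)
qed (simp add: Qip_def vec_apply)

lemma Qip_orthogonal_span: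
  assumes "\<forall>s\<in>S. Qip N w s = 0" "z \<in> V.span S"
  shows "Qip N w z = 0"
  using assms(2)
proof (induction rule: V.span_induct_alt)
  case (step c x y)
  then show ?case
    using assms(1) by (simp add: Qip_commute[of N w] Qip_add_left Qip_scale_left)
qed simp

lemma Qip_projection_exists:
  assumes "finite S" "S \<subseteq> gsp N" "v \<in> gsp N"
  shows "\<exists>p\<in>V.span S. \<forall>s\<in>S. Qip N (v - p) s = 0"
  using assms
proof (induction S arbitrary: v rule: finite_induct)
  case empty
  then show ?case using V.span_zero by blast
next
  case (insert a S)
  then have a: "a \<in> gsp N" and S: "S \<subseteq> gsp N" by auto
  obtain p' where p': "p' \<in> V.span S" "\<forall>s\<in>S. Qip N (v - p') s = 0"
    using insert.IH[OF S insert.prems(2)] by blast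
  obtain q where q: "q \<in> V.span S" "\<forall>s\<in>S. Qip N (a - q) s = 0"
    using insert.IH[OF S a] by blast
  have "q \<in> gsp N"
    using q(1) S gsp_subspace V.span_minimal by blast
  then have aq: "a - q \<in> gsp N"
    using a gsp_subspace V.subspace_diff by blast
  \<comment> \<open>If a - q = 0, division by zero makes c = 0, which is harmless.\<close>
  define c where "c = Qip N (v - p') (a - q) / Qip N (a - q) (a - q)"
  define p where "p = p' + vsc c (a - q)"
  have v_p: "v - p = (v - p') - vsc c (a - q)"
    by (simp add: p_def)
  have orth_S: "\<forall>s\<in>S. Qip N (v - p) s = 0"
    using p'(2) q(2) by (simp add: v_p Qip_diff_left Qip_scale_left)
  have "Qip N (v - p) (a - q) = 0"
  proof (cases "Qip N (a - q) (a - q) = 0")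
    case True
    then show ?thesis using Qip_self_eq_0_iff[OF aq] by simp
  next
    case False
    then show ?thesis by (simp add: v_p c_def Qip_diff_left Qip_scale_left)
  qed
  moreover have "Qip N (v - p) q = 0"
    using Qip_orthogonal_span[OF orth_S q(1)] .
  ultimately have "Qip N (v - p) a = 0"
    using Qip_add_left[of N "a - q" q "v - p"] by (simp add: Qip_commute)
  moreover have "p \<in> V.span (insert a S)"
    unfolding p_def using p'(1) q(1) V.span_mono[of S "insert a S"]
    by (intro V.span_add V.span_scale V.span_diff) (auto intro: V.span_base)
  ultimately show ?case using orth_S by auto
qed

lemma tproj_eqI:
  assumes T: "V.subspace T" "T \<subseteq> gsp N" and p: "p \<in> T" "\<forall>u\<in>T. Qip N (v - p) u = 0"
  shows "tproj N T v = p"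
  unfolding tproj_def
proof (rule the_equality)
  fix p' assume p': "p' \<in> T \<and> (\<forall>u\<in>T. Qip N (v - p') u = 0)"
  then have d: "p' - p \<in> T"
    using p T(1) V.subspace_diff by blast
  have "p' - p = (v - p) - (v - p')"
    by simp
  then have "Qip N (p' - p) (p' - p) = 0"
    using p p' d by (metis Qip_diff_left diff_self)
  then show "p' = p"
    using Qip_self_eq_0_iff d T(2) by auto
qed (use p in auto)

lemma tproj_props:
  assumes T: "V.subspace T" "T \<subseteq> gsp N" and v: "v \<in> gsp N"
  shows "tproj N T v \<in> T \<and> (\<forall>u\<in>T. Qip N (v - tproj N T v) u = 0)"
proof -
  obtain A where A: "finite A" "A \<subseteq> T" "V.independent A" "T \<subseteq> V.span A"
    using gsp_subset_has_finite_basis[OF T(2)] by blast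
  obtain p where p: "p \<in> V.span A" "\<forall>s\<in>A. Qip N (v - p) s = 0"
    using Qip_projection_exists[OF A(1) _ v] A(2) T(2) by blast
  have "p \<in> T" "\<forall>u\<in>T. Qip N (v - p) u = 0"
    using p A(2,4) V.span_minimal[OF A(2) T(1)] Qip_orthogonal_span[OF p(2)] by auto
  then show ?thesis
    using tproj_eqI[OF T] by simp
qed

lemma tproj_linear:
  assumes T: "V.subspace T" "T \<subseteq> gsp N" and "v \<in> gsp N" "w \<in> gsp N"
  shows "tproj N T (vsc a v + w) = vsc a (tproj N T v) + tproj N T w"
proof (rule tproj_eqI[OF T])
  let ?p = "tproj N T v" and ?q = "tproj N T w"
  have p: "?p \<in> T" "\<forall>u\<in>T. Qip N (v - ?p) u = 0"
    and q: "?q \<in> T" "\<forall>u\<in>T. Qip N (w - ?q) u = 0"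
    using tproj_props[OF T] assms(3,4) by auto
  show "vsc a ?p + ?q \<in> T"
    using p q T(1) by (intro V.subspace_add V.subspace_scale) auto
  have residual: "vsc a v + w - (vsc a ?p + ?q) = vsc a (v - ?p) + (w - ?q)"
    by (simp add: V.scale_right_diff_distrib)
  show "\<forall>u\<in>T. Qip N (vsc a v + w - (vsc a ?p + ?q)) u = 0"
    unfolding residual using p q by (simp add: Qip_add_left Qip_scale_left)
qed

lemma bracket_closed:
  "compact_lie_alg N br \<Longrightarrow> x \<in> gsp N \<Longrightarrow> y \<in> gsp N \<Longrightarrow> br x y \<in> gsp N"
  unfolding compact_lie_alg_def by blast

lemma bracket_linear_right:
  assumes br: "compact_lie_alg N br" and x: "x \<in> gsp N" and yz: "y \<in> gsp N" "z \<in> gsp N"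
  shows "br x (vsc a y + z) = vsc a (br x y) + br x z"
proof -
  have anti: "br u w = - br w u" if "u \<in> gsp N" "w \<in> gsp N" for u w
    using br that unfolding compact_lie_alg_def by blast
  have "vsc a y + z \<in> gsp N"
    using yz gsp_subspace by (intro V.subspace_add V.subspace_scale) auto
  then have "br x (vsc a y + z) = - br (vsc a y + z) x"
    using anti x by blast
  also have "br (vsc a y + z) x = vsc a (br y x) + br z x"
    using br x yz unfolding compact_lie_alg_def by blast
  also have "- (vsc a (br y x) + br z x) = vsc a (br x y) + br x z"
    using anti[OF x] yz by (simp add: V.scale_minus_right)
  finally show ?thesis .
qed

lemma Abb_in_tt:
  assumes "compact_lie_alg N br" "V.subspace T" "T \<subseteq> gsp N" "x \<in> gsp N" "y \<in> gsp N"
  shows "Abb N br T x y \<in> T"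
  unfolding Abb_def using assms tproj_props bracket_closed V.subspace_scale by blast

lemma Abb_linear_right:
  assumes br: "compact_lie_alg N br" and T: "V.subspace T" "T \<subseteq> gsp N"
    and "x \<in> gsp N" "y \<in> gsp N" "z \<in> gsp N"
  shows "Abb N br T x (vsc a y + z) = vsc a (Abb N br T x y) + Abb N br T x z"
  using assms
  by (simp add: Abb_def bracket_linear_right tproj_linear bracket_closed V.scale_right_distrib)

lemma Abb_sum_right:
  assumes br: "compact_lie_alg N br" and T: "V.subspace T" "T \<subseteq> gsp N"
    and x: "x \<in> gsp N" and A: "finite A" "A \<subseteq> gsp N"
  shows "Abb N br T x (\<Sum>y\<in>A. vsc (c y) y) = (\<Sum>y\<in>A. vsc (c y) (Abb N br T x y))"
  using A
proof (induction A rule: finite_induct)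
  case empty
  have "(0::vec) \<in> gsp N"
    using gsp_subspace V.subspace_0 by blast
  then have "Abb N br T x (vsc (-1) 0 + 0) = vsc (-1) (Abb N br T x 0) + Abb N br T x 0"
    using Abb_linear_right[OF br T x] by blast
  then show ?case
    by (simp add: V.scale_minus_left)
next
  case (insert a A)
  have "(\<Sum>y\<in>A. vsc (c y) y) \<in> gsp N"
    using insert gsp_subspace by (intro V.subspace_sum) (auto intro: V.subspace_scale)
  then show ?case
    using insert Abb_linear_right[OF br T x, of a _ "c a"] by simp
qed

lemma gram_frobenius_le_sum_squares:
  fixes c :: "'i \<Rightarrow> 'j \<Rightarrow> real"
  shows "sqrt (\<Sum>j\<in>J. \<Sum>j'\<in>J. (\<Sum>i\<in>I. c i j * c i j')\<^sup>2) \<le> (\<Sum>i\<in>I. \<Sum>j\<in>J. (c i j)\<^sup>2)"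
proof -
  define D where "D j = (\<Sum>i\<in>I. (c i j)\<^sup>2)" for j
  have "(\<Sum>j\<in>J. \<Sum>j'\<in>J. (\<Sum>i\<in>I. c i j * c i j')\<^sup>2) \<le> (\<Sum>j\<in>J. \<Sum>j'\<in>J. D j * D j')"
    by (intro sum_mono) (simp add: D_def Cauchy_Schwarz_ineq_sum)
  also have "\<dots> = (\<Sum>j\<in>J. D j)\<^sup>2"
    by (simp add: power2_eq_square sum_product)
  finally show ?thesis
    by (simp add: D_def sum.swap[of _ I] real_le_lsqrt sum_nonneg)
qed

lemma sum_squares_le_sqrt_card_gram_frobenius:
  fixes c :: "'i \<Rightarrow> 'j \<Rightarrow> real"
  assumes "finite J"
  shows "(\<Sum>i\<in>I. \<Sum>j\<in>J. (c i j)\<^sup>2) \<le>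
    sqrt (card J) * sqrt (\<Sum>j\<in>J. \<Sum>j'\<in>J. (\<Sum>i\<in>I. c i j * c i j')\<^sup>2)"
proof -
  define D where "D j = (\<Sum>i\<in>I. (c i j)\<^sup>2)" for j
  have diagonal: "(D j)\<^sup>2 \<le> (\<Sum>j'\<in>J. (\<Sum>i\<in>I. c i j * c i j')\<^sup>2)" if "j \<in> J" for j
    using member_le_sum[of j J "\<lambda>j'. (\<Sum>i\<in>I. c i j * c i j')\<^sup>2"] that assms
    by (simp add: D_def power2_eq_square)
  have "(\<Sum>j\<in>J. D j)\<^sup>2 \<le> card J * (\<Sum>j\<in>J. (D j)\<^sup>2)"
    using sum_squared_le_sum_of_squares[of D J] by (simp add: mult.commute)
  also have "\<dots> \<le> card J * (\<Sum>j\<in>J. \<Sum>j'\<in>J. (\<Sum>i\<in>I. c i j * c i j')\<^sup>2)"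
    using diagonal by (intro mult_left_mono sum_mono) auto
  finally show ?thesis
    by (simp add: D_def sum.swap[of _ I] real_sqrt_mult[symmetric] real_le_rsqrt sum_nonneg)
qed

lemma two_sided_bound_of_sqrt_card_bound:
  fixes F T :: real and n m :: nat
  assumes "0 \<le> F" "F \<le> T" "T \<le> sqrt n * F" "n \<le> m"
  shows "inverse (real m + 2) * T \<le> F \<and> F \<le> (real m + 2) * T"
proof
  have "sqrt n \<le> real n + 1"
    using zero_le_square[of "real n"]
    by (intro real_le_lsqrt) (auto simp: power2_eq_square algebra_simps)
  then have "T \<le> (real m + 2) * F"
    using assms by (smt (verit) mult_right_mono of_nat_mono)
  then show "inverse (real m + 2) * T \<le> F"
    by (simp add: field_simps)
  show "F \<le> (real m + 2) * T"
    using assms(1,2) by (smt (verit) mult_le_cancel_right1 of_nat_0_le_iff)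
qed

locale inner_product_on =
  fixes M :: "vec set" and gm :: "vec \<Rightarrow> vec \<Rightarrow> real"
  assumes subspace: "V.subspace M"
    and linear_left: "x \<in> M \<Longrightarrow> y \<in> M \<Longrightarrow> z \<in> M \<Longrightarrow> gm (vsc a x + y) z = a * gm x z + gm y z"
    and commute: "x \<in> M \<Longrightarrow> y \<in> M \<Longrightarrow> gm x y = gm y x"
    and positive: "x \<in> M \<Longrightarrow> x \<noteq> 0 \<Longrightarrow> gm x x > 0"
begin

lemma zero_left: "z \<in> M \<Longrightarrow> gm 0 z = 0"
  using linear_left[of 0 0 z "-1"] subspace V.subspace_0 by (simp add: V.scale_zero_right)

lemma scale_left: "x \<in> M \<Longrightarrow> z \<in> M \<Longrightarrow> gm (vsc a x) z = a * gm x z"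
  using linear_left[of x 0 z a] subspace V.subspace_0 zero_left by simp

lemma diff_left: "x \<in> M \<Longrightarrow> y \<in> M \<Longrightarrow> z \<in> M \<Longrightarrow> gm (x - y) z = gm x z - gm y z"
  using linear_left[of y x z "-1"] by (simp add: V.scale_minus_left)

lemma sum_left:
  assumes "finite A" "\<And>a. a \<in> A \<Longrightarrow> f a \<in> M" "z \<in> M"
  shows "gm (sum f A) z = (\<Sum>a\<in>A. gm (f a) z)"
  using assms
proof (induction A rule: finite_induct)
  case empty
  then show ?case using zero_left by simp
next
  case (insert a A)
  have "sum f A \<in> M"
    using insert by (intro V.subspace_sum[OF subspace]) auto
  then show ?case
    using insert linear_left[of "f a" "sum f A" z 1] by simp
qed

lemma self_eq_0_iff: "x \<in> M \<Longrightarrow> gm x x = 0 \<longleftrightarrow> x = 0"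
  using positive zero_left by fastforce

end

locale onb_in = inner_product_on +
  fixes S Bs
  assumes S: "S \<subseteq> M" "V.subspace S" and Bs: "onb gm S Bs"
begin

lemma onb_finite: "finite Bs"
  using Bs by (simp add: onb_def)

lemma onb_subset: "Bs \<subseteq> S"
  using Bs by (simp add: onb_def)

lemma onb_orthonormal: "x \<in> Bs \<Longrightarrow> y \<in> Bs \<Longrightarrow> gm x y = (if x = y then 1 else 0)"
  using Bs by (simp add: onb_def)

lemma onb_coefficient:
  assumes b': "b' \<in> Bs"
  shows "gm (\<Sum>b\<in>Bs. vsc (u b) b) b' = u b'"
proof -
  have Bs_M: "Bs \<subseteq> M"
    using onb_subset S by blast
  have "gm (\<Sum>b\<in>Bs. vsc (u b) b) b' = (\<Sum>b\<in>Bs. u b * gm b b')"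
    using Bs_M b' onb_finite
    by (subst sum_left) (auto intro: V.subspace_scale[OF subspace] scale_left sum.cong)
  also have "\<dots> = u b'"
    using onb_finite b' by (simp add: onb_orthonormal if_distrib cong: if_cong)
  finally show ?thesis .
qed

lemma onb_expansion: "v \<in> S \<Longrightarrow> v = (\<Sum>b\<in>Bs. vsc (gm v b) b)"
proof -
  assume "v \<in> S"
  then have "v \<in> V.span Bs"
    using Bs by (auto simp: onb_def vspan_def)
  then obtain u where u: "v = (\<Sum>b\<in>Bs. vsc (u b) b)"
    using V.span_finite[OF onb_finite] by auto
  then have "gm v b = u b" if "b \<in> Bs" for b
    using onb_coefficient[OF that] by simp
  with u show ?thesis
    by (auto intro: sum.cong)
qed

lemma onb_parseval:
  assumes v: "v \<in> S" and w: "w \<in> S"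
  shows "gm v w = (\<Sum>b\<in>Bs. gm v b * gm w b)"
proof -
  have Bs_M: "Bs \<subseteq> M" and w_M: "w \<in> M"
    using onb_subset S w by blast+
  have "gm v w = gm (\<Sum>b\<in>Bs. vsc (gm v b) b) w"
    using onb_expansion[OF v] by simp
  also have "\<dots> = (\<Sum>b\<in>Bs. gm v b * gm w b)"
    using Bs_M w_M onb_finite
    by (subst sum_left)
      (auto intro!: sum.cong intro: V.subspace_scale[OF subspace] simp: scale_left commute)
  finally show ?thesis .
qed

lemma onb_independent: "V.independent Bs"
proof (rule V.independent_if_scalars_zero[OF onb_finite])
  fix f x
  assume "(\<Sum>x\<in>Bs. vsc (f x) x) = 0" and x: "x \<in> Bs"
  then show "f x = 0"
    using onb_coefficient[OF x, of f] zero_left onb_subset S by auto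
qed

lemma onb_riesz_representation:
  assumes f: "\<forall>Y\<in>S. f Y = (\<Sum>b\<in>Bs. gm Y b * f b)"
  shows "\<exists>!w. w \<in> S \<and> (\<forall>Y\<in>S. gm w Y = f Y)"
proof
  define w where "w = (\<Sum>b\<in>Bs. vsc (f b) b)"
  have w: "w \<in> S"
    unfolding w_def using onb_subset S(2)
    by (intro V.subspace_sum) (auto intro: V.subspace_scale)
  moreover have represents: "\<forall>Y\<in>S. gm w Y = f Y"
    using onb_parseval[OF w] onb_coefficient[of _ f] f by (simp add: w_def mult.commute)
  ultimately show "w \<in> S \<and> (\<forall>Y\<in>S. gm w Y = f Y)"
    by blast
  fix w' assume w': "w' \<in> S \<and> (\<forall>Y\<in>S. gm w' Y = f Y)"
  then have d: "w' - w \<in> S"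
    using w S(2) V.subspace_diff by blast
  then have "gm (w' - w) (w' - w) = 0"
    using w w' represents S(1) by (subst diff_left) auto
  then show "w' = w"
    using self_eq_0_iff d S(1) by auto
qed

lemma card_onb_le_vdim:
  assumes "M \<subseteq> gsp N"
  shows "card Bs \<le> vdim M"
proof -
  obtain A where A: "finite A" "A \<subseteq> M" "V.independent A" "M \<subseteq> V.span A"
    using gsp_subset_has_finite_basis[OF assms] by blast
  have "Bs \<subseteq> V.span A"
    using onb_subset S(1) A(4) by blast
  then have "card Bs \<le> card A"
    using V.independent_span_bound[OF A(1) onb_independent] by blast
  also have "card A = vdim M"
    unfolding vdim_def using V.basis_card_eq_dim[OF A(2,4,3)] .
  finally show ?thesis .
qed

end

lemma msp_subspace: "V.subspace (msp N H)"
  unfolding V.subspace_def msp_def gsp_def by (auto simp: Qip_add_left Qip_scale_left vec_apply)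

lemma bsp_subspace: "V.subspace (bsp N H tt)"
  using msp_subspace[of N H] unfolding V.subspace_def bsp_def
  by (auto simp: Qip_add_left Qip_scale_left)

lemma bsp_subset_msp: "bsp N H tt \<subseteq> msp N H"
  by (auto simp: bsp_def)

lemma msp_subset_gsp: "msp N H \<subseteq> gsp N"
  by (auto simp: msp_def)

locale oneill_setting =
  fixes N br H tt gm XB UB
  assumes lie_algebra: "compact_lie_alg N br" and torus: "torus_alg N br H tt"
    and metric: "GT_metric N br H tt gm"
    and XB: "onb gm (bsp N H tt) XB" and UB: "onb gm tt UB"
begin

sublocale inner_product_on "msp N H" gm
  using metric msp_subspace by unfold_locales (auto simp: GT_metric_def)

lemma tt_subspace: "V.subspace tt"
  using torus by (simp add: torus_alg_def vsubspace_def)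

lemma tt_subset_msp: "tt \<subseteq> msp N H"
  using torus by (auto simp: torus_alg_def m0sp_def)

lemma tt_subset_gsp: "tt \<subseteq> gsp N"
  using tt_subset_msp msp_subset_gsp by blast

sublocale XB: onb_in "msp N H" gm "bsp N H tt" XB
  using bsp_subset_msp bsp_subspace XB by unfold_locales

sublocale UB: onb_in "msp N H" gm tt UB
  using tt_subset_msp tt_subspace UB by unfold_locales

lemma XB_subset_gsp: "XB \<subseteq> gsp N"
  using XB.onb_subset bsp_subset_msp msp_subset_gsp by blast

lemma Abb_in_tt': "x \<in> gsp N \<Longrightarrow> y \<in> gsp N \<Longrightarrow> Abb N br tt x y \<in> tt"
  using Abb_in_tt[OF lie_algebra tt_subspace tt_subset_gsp] .

lemma Abt_props:
  assumes x: "x \<in> gsp N" and U: "U \<in> tt"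
  shows "Abt N br H tt gm x U \<in> bsp N H tt \<and>
    (\<forall>Y\<in>bsp N H tt. gm (Abt N br H tt gm x U) Y = - gm (Abb N br tt x Y) U)"
proof -
  have U_msp: "U \<in> msp N H" and Abb_msp: "b \<in> XB \<Longrightarrow> Abb N br tt x b \<in> msp N H" for b
    using U XB_subset_gsp Abb_in_tt'[OF x] tt_subset_msp by blast+
  have "- gm (Abb N br tt x Y) U = (\<Sum>b\<in>XB. gm Y b * - gm (Abb N br tt x b) U)"
    if Y: "Y \<in> bsp N H tt" for Y
  proof -
    have "Abb N br tt x Y = (\<Sum>b\<in>XB. vsc (gm Y b) (Abb N br tt x b))"
      using Abb_sum_right[OF lie_algebra tt_subspace tt_subset_gsp x XB.onb_finite XB_subset_gsp]
        XB.onb_expansion[OF Y] by metis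
    then have "gm (Abb N br tt x Y) U = (\<Sum>b\<in>XB. gm (vsc (gm Y b) (Abb N br tt x b)) U)"
      using XB.onb_finite U_msp Abb_msp
      by (auto intro!: sum_left intro: V.subspace_scale[OF subspace])
    then show ?thesis
      using U_msp Abb_msp by (auto simp: scale_left sum_negf intro!: sum.cong)
  qed
  from theI'[OF XB.onb_riesz_representation[OF ballI[OF this]]] show ?thesis
    unfolding Abt_def .
qed

lemma hatA_eq:
  assumes U: "U \<in> tt" and V: "V \<in> tt"
  shows "hatA N br H tt gm XB U V =
    (\<Sum>x\<in>XB. \<Sum>y\<in>XB. gm (Abb N br tt x y) U * gm (Abb N br tt x y) V)"
  unfolding hatA_def
proof (intro sum.cong refl)
  fix x assume "x \<in> XB"
  then have x: "x \<in> gsp N"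
    using XB_subset_gsp by blast
  have "gm (Abt N br H tt gm x U) (Abt N br H tt gm x V) =
      (\<Sum>y\<in>XB. gm (Abt N br H tt gm x U) y * gm (Abt N br H tt gm x V) y)"
    using Abt_props[OF x U] Abt_props[OF x V] by (simp add: XB.onb_parseval)
  also have "\<dots> = (\<Sum>y\<in>XB. gm (Abb N br tt x y) U * gm (Abb N br tt x y) V)"
    using Abt_props[OF x U] Abt_props[OF x V] XB.onb_subset by (auto intro!: sum.cong)
  finally show "gm (Abt N br H tt gm x U) (Abt N br H tt gm x V) =
      (\<Sum>y\<in>XB. gm (Abb N br tt x y) U * gm (Abb N br tt x y) V)" .
qed

lemma normA_sq_eq:
  "normA_sq N br tt gm XB = (\<Sum>x\<in>XB. \<Sum>y\<in>XB. \<Sum>k\<in>UB. (gm (Abb N br tt x y) k)\<^sup>2)"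
  unfolding normA_sq_def
  using XB_subset_gsp Abb_in_tt'
  by (intro sum.cong refl) (simp add: UB.onb_parseval power2_eq_square subsetD)

lemma checkA_eq:
  assumes "X \<in> XB" "Y \<in> XB"
  shows "checkA N br tt gm XB X Y =
    (\<Sum>x\<in>XB. \<Sum>k\<in>UB. gm (Abb N br tt X x) k * gm (Abb N br tt Y x) k)"
  unfolding checkA_def
  using assms XB_subset_gsp Abb_in_tt'
  by (intro sum.cong refl) (simp add: UB.onb_parseval subsetD)

lemma hatA_form_norm_bounds:
  "form_norm UB (hatA N br H tt gm XB) \<le> normA_sq N br tt gm XB \<and>
   normA_sq N br tt gm XB \<le> sqrt (card UB) * form_norm UB (hatA N br H tt gm XB)"
proof -
  define c where "c i k = gm (Abb N br tt (fst i) (snd i)) k" for i :: "vec \<times> vec" and k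
  have "form_norm UB (hatA N br H tt gm XB) =
      sqrt (\<Sum>k\<in>UB. \<Sum>k'\<in>UB. (\<Sum>i\<in>XB \<times> XB. c i k * c i k')\<^sup>2)"
    unfolding form_norm_def
    by (simp add: hatA_eq subsetD[OF UB.onb_subset] c_def sum.cartesian_product')
  moreover have "normA_sq N br tt gm XB = (\<Sum>i\<in>XB \<times> XB. \<Sum>k\<in>UB. (c i k)\<^sup>2)"
    by (simp add: normA_sq_eq c_def sum.cartesian_product')
  ultimately show ?thesis
    using gram_frobenius_le_sum_squares[where c=c and I="XB \<times> XB" and J=UB]
      sum_squares_le_sqrt_card_gram_frobenius[OF UB.onb_finite, where c=c and I="XB \<times> XB"]
    by simp
qed

lemma checkA_form_norm_bounds:
  "form_norm XB (checkA N br tt gm XB) \<le> normA_sq N br tt gm XB \<and>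
   normA_sq N br tt gm XB \<le> sqrt (card XB) * form_norm XB (checkA N br tt gm XB)"
proof -
  define c where "c i X = gm (Abb N br tt X (fst i)) (snd i)" for i :: "vec \<times> vec" and X
  have "form_norm XB (checkA N br tt gm XB) =
      sqrt (\<Sum>X\<in>XB. \<Sum>Y\<in>XB. (\<Sum>i\<in>XB \<times> UB. c i X * c i Y)\<^sup>2)"
    unfolding form_norm_def by (auto simp: checkA_eq c_def sum.cartesian_product' intro!: sum.cong)
  moreover have "normA_sq N br tt gm XB = (\<Sum>X\<in>XB. \<Sum>i\<in>XB \<times> UB. (c i X)\<^sup>2)"
    by (simp add: normA_sq_eq c_def sum.cartesian_product')
  moreover have "\<dots> = (\<Sum>i\<in>XB \<times> UB. \<Sum>X\<in>XB. (c i X)\<^sup>2)"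
    by (rule sum.swap)
  ultimately show ?thesis
    using gram_frobenius_le_sum_squares[where c=c and I="XB \<times> UB" and J=XB]
      sum_squares_le_sqrt_card_gram_frobenius[OF XB.onb_finite, where c=c and I="XB \<times> UB"]
    by simp
qed

lemma oneill_tensor_norm_bounds:
  fixes C :: real
  assumes "vdim (msp N H) = m" and "C = real m + 2"
  shows "(inverse C * normA_sq N br tt gm XB \<le> form_norm UB (hatA N br H tt gm XB) \<and>
          form_norm UB (hatA N br H tt gm XB) \<le> C * normA_sq N br tt gm XB) \<and>
         (inverse C * normA_sq N br tt gm XB \<le> form_norm XB (checkA N br tt gm XB) \<and>
          form_norm XB (checkA N br tt gm XB) \<le> C * normA_sq N br tt gm XB)"
proof -
  have "0 \<le> form_norm B F" for B F
    by (simp add: form_norm_def sum_nonneg)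
  then show ?thesis
    unfolding assms(2) assms(1)[symmetric]
    using hatA_form_norm_bounds checkA_form_norm_bounds
      two_sided_bound_of_sqrt_card_bound[OF _ _ _ UB.card_onb_le_vdim[OF msp_subset_gsp]]
      two_sided_bound_of_sqrt_card_bound[OF _ _ _ XB.card_onb_le_vdim[OF msp_subset_gsp]]
    by blast
qed

end

theorem proposition4p2:
  shows "\<forall>m::nat. \<exists>C::real. C > 1 \<and>
    (\<forall>N br H tt gm XB UB.
       compact_lie_alg N br \<and> isotropy_alg N br H \<and> torus_alg N br H tt \<and>
       GT_metric N br H tt gm \<and> vdim (msp N H) = m \<and>
       onb gm (bsp N H tt) XB \<and> onb gm tt UB \<longrightarrow>
         (inverse C * normA_sq N br tt gm XB \<le> form_norm UB (hatA N br H tt gm XB) \<and>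
          form_norm UB (hatA N br H tt gm XB) \<le> C * normA_sq N br tt gm XB) \<and>
         (inverse C * normA_sq N br tt gm XB \<le> form_norm XB (checkA N br tt gm XB) \<and>
          form_norm XB (checkA N br tt gm XB) \<le> C * normA_sq N br tt gm XB))"
  apply (intro allI)
  subgoal for m
    using oneill_setting.oneill_tensor_norm_bounds[OF oneill_setting.intro _ refl]
    by (intro exI[of _ "real m + 2"] conjI allI impI) auto
  done

end
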